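(* Let $g:\{0,1,2,3\}^*\to\{0,1,2,3\}^*$ be the morphism $g(0)=01$, $g(1)=20$, $g(2)=23$, $g(3)=02$, and $\tau$ the coding $\tau(0)=2$, $\tau(1)=1$, $\tau(2)=0$, $\tau(3)=1$; let $\mathbf{vtm}=\tau(g^\omega(0))=2102012101202102012021012102012\cdots$ (an infinite word over $\{0,1,2\}$). Let $\sigma:\{0,1,2\}^*\to\{0,1\}^*$ be the morphism $\sigma(0)=00011001011000111001011001110001011100101100010111$, $\sigma(1)=00011001011000101110010110011100010110001110010111$, $\sigma(2)=00011001011000101110010110001110010111000101100111$. Then $\sigma(\mathbf{vtm})$ is a $2$-automatic word containing only three distinct squares, and it is generated by a $2$-automaton with $109$ states (so it has weight $2\cdot 109=218$).
   Context: A square is a nonempty word $xx$; "containing" means as a factor. $g^\omega(0)$ denotes the infinite fixed point of $g$ starting with $0$. An infinite word is $k$-automatic if it is generated by a $k$-automaton (DFAO), i.e. a deterministic finite automaton with output which, given the base-$k$ representation of $n$ (most significant digit first), outputs the $n$th letter; equivalently, it is the image under a coding of a fixed point of a $k$-uniform morphism. The weight of a $k$-automatic word generated by a $k$-automaton with $s$ states (equivalently, the weight of the corresponding $k$-uniform morphism on $s$ letters) is $k\cdot s$. *)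

theory Defs
  imports Main
begin

definition morph :: "(nat \<Rightarrow> nat list) \<Rightarrow> nat list \<Rightarrow> nat list" where
  "morph h u = concat (map h u)"

(* g^omega(a): the n-th letter is the n-th letter of g^(n+1)(a) (well-defined as a
   limit when g(a) starts with a and g is prolongable, e.g. uniform). *)
definition fixpoint :: "(nat \<Rightarrow> nat list) \<Rightarrow> nat \<Rightarrow> (nat \<Rightarrow> nat)" where
  "fixpoint h a = (\<lambda>n. ((morph h ^^ (Suc n)) [a]) ! n)"

(* image of an infinite word under a nonerasing morphism *)
definition morph_inf :: "(nat \<Rightarrow> nat list) \<Rightarrow> (nat \<Rightarrow> nat) \<Rightarrow> (nat \<Rightarrow> nat)" where
  "morph_inf h x = (\<lambda>n. morph h (map x [0..<Suc n]) ! n)"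

definition g :: "nat \<Rightarrow> nat list" where
  "g a = (if a = 0 then [0,1] else if a = 1 then [2,0] else if a = 2 then [2,3] else [0,2])"

definition tau :: "nat \<Rightarrow> nat" where
  "tau a = (if a = 0 then 2 else if a = 1 then 1 else if a = 2 then 0 else 1)"

definition vtm :: "nat \<Rightarrow> nat" where
  "vtm = tau \<circ> fixpoint g 0"

definition str01 :: "string \<Rightarrow> nat list" where
  "str01 s = map (\<lambda>c. if c = CHR ''1'' then 1 else 0) s"

definition sigma :: "nat \<Rightarrow> nat list" where
  "sigma a = (if a = 0 then str01 ''00011001011000111001011001110001011100101100010111''
    else if a = 1 then str01 ''00011001011000101110010110011100010110001110010111''
    else str01 ''00011001011000101110010110001110010111000101100111'')"

definition is_factor :: "nat list \<Rightarrow> (nat \<Rightarrow> nat) \<Rightarrow> bool" where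
  "is_factor u w \<longleftrightarrow> (\<exists>i. \<forall>j < length u. w (i + j) = u ! j)"

definition squares_of :: "(nat \<Rightarrow> nat) \<Rightarrow> nat list set" where
  "squares_of w = {u. \<exists>x. x \<noteq> [] \<and> u = x @ x \<and> is_factor u w}"

(* base-k representation, most significant digit first, no leading zeros (0 \<mapsto> []) *)
function base_digits :: "nat \<Rightarrow> nat \<Rightarrow> nat list" where
  "base_digits k n = (if n = 0 \<or> k < 2 then [] else base_digits k (n div k) @ [n mod k])"
  by auto
termination by (relation "measure snd") auto

definition dfao_run :: "nat \<Rightarrow> nat \<Rightarrow> (nat \<Rightarrow> nat \<Rightarrow> nat) \<Rightarrow> nat \<Rightarrow> nat" where
  "dfao_run k q0 delta n = fold (\<lambda>d q. delta q d) (base_digits k n) q0"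

definition dfao_generates ::
  "nat \<Rightarrow> nat set \<Rightarrow> nat \<Rightarrow> (nat \<Rightarrow> nat \<Rightarrow> nat) \<Rightarrow> (nat \<Rightarrow> nat) \<Rightarrow> (nat \<Rightarrow> nat) \<Rightarrow> bool" where
  "dfao_generates k Q q0 delta out w \<longleftrightarrow>
     finite Q \<and> q0 \<in> Q \<and> (\<forall>q\<in>Q. \<forall>d<k. delta q d \<in> Q) \<and>
     (\<forall>n. out (dfao_run k q0 delta n) = w n)"

definition k_automatic :: "nat \<Rightarrow> (nat \<Rightarrow> nat) \<Rightarrow> bool" where
  "k_automatic k w \<longleftrightarrow> (\<exists>Q q0 delta out. dfao_generates k Q q0 delta out w)"

end

theory Submission
  imports Defs "HOL-Library.Sublist"
begin

text \<open>
  The word vtm is the image under tau of the fixed point gfix of the 2-uniform morphism g, and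
  its image svtm under the 50-uniform morphism sigma satisfies
  svtm n = sigma (vtm (n div 50)) ! (n mod 50). Reading n in binary, the pair
  (gfix (n div 50), n mod 50) is updated digit by digit, so svtm is generated by an automaton on
  these 200 pairs; merging equivalent pairs leaves 109 states.

  vtm is squarefree by descent. A square of period p in vtm is a pattern in gfix relating the
  letters at distance p. For p >= 6 the period is even: tau identifies exactly the odd letters,
  and gfix has an odd letter at every position congruent to 1 mod 4 but only at odd positions.
  Desubstituting g then gives a pattern of period p/2 from a family of two patterns closed under
  this halving. Patterns with p <= 5 are excluded by inspecting the 36 factors of length 11 of
  gfix.

  Any 24 consecutive letters of svtm determine their starting position modulo 50, so a square in
  svtm of period at least 24 has a period divisible by 50, and its blocks give a square in vtm.
  Shorter squares lie within sigma x @ sigma z for two adjacent letters x, z of vtm, and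
  inspecting these six words leaves only 00, 11 and 0101.
\<close>

lemma length_morph_uniform:
  assumes "\<And>a. length (h a) = k"
  shows "length (morph h xs) = k * length xs"
  using assms by (induction xs) (auto simp: morph_def)

lemma morph_uniform_nth:
  assumes "\<And>a. length (h a) = k" and "i < k * length xs"
  shows "morph h xs ! i = h (xs ! (i div k)) ! (i mod k)"
  using assms(2)
proof (induction xs arbitrary: i)
  case Nil
  then show ?case by simp
next
  case (Cons x xs)
  show ?case
  proof (cases "i < k")
    case True
    then show ?thesis by (simp add: morph_def nth_append assms(1))
  next
    case False
    then have "i - k < k * length xs" and k: "0 < k"
      using Cons.prems by (auto intro: gr0I)
    moreover have "i div k = Suc ((i - k) div k)" "i mod k = (i - k) mod k"
      using False k by (simp_all add: le_div_geq le_mod_geq)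
    ultimately show ?thesis
      using False Cons.IH[of "i - k"] by (simp add: morph_def nth_append assms(1))
  qed
qed

lemma morph_inf_uniform:
  assumes "\<And>a. length (h a) = k" and "0 < k"
  shows "morph_inf h x n = h (x (n div k)) ! (n mod k)"
proof -
  have "n < k * length (map x [0..<Suc n])"
    using assms(2) mult_le_mono1[of 1 k "Suc n"] by simp
  then have "morph h (map x [0..<Suc n]) ! n = h (map x [0..<Suc n] ! (n div k)) ! (n mod k)"
    by (rule morph_uniform_nth[OF assms(1)])
  moreover have "n div k < Suc n" by (simp add: le_imp_less_Suc)
  ultimately show ?thesis
    unfolding morph_inf_def by (simp del: upt_Suc)
qed

lemma sublist_iff_take_drop:
  "sublist xs ys \<longleftrightarrow> (\<exists>i. i + length xs \<le> length ys \<and> take (length xs) (drop i ys) = xs)"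
proof
  assume "sublist xs ys"
  then obtain ps ss where "ys = ps @ xs @ ss"
    by (auto simp: sublist_def)
  then show "\<exists>i. i + length xs \<le> length ys \<and> take (length xs) (drop i ys) = xs"
    by (intro exI[of _ "length ps"]) simp
next
  assume "\<exists>i. i + length xs \<le> length ys \<and> take (length xs) (drop i ys) = xs"
  then show "sublist xs ys"
    by (metis sublist_order.order_trans sublist_take sublist_drop)
qed

definition has_square_of_period :: "nat \<Rightarrow> 'a list \<Rightarrow> bool" where
  "has_square_of_period p u \<longleftrightarrow> (\<exists>v. length v = p \<and> sublist (v @ v) u)"

lemma has_square_of_period_iff_nth:
  "has_square_of_period p u \<longleftrightarrow>
     (\<exists>i. i + 2 * p \<le> length u \<and> (\<forall>j<p. u ! (i + j) = u ! (i + j + p)))"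
proof
  assume "has_square_of_period p u"
  then obtain v i where v: "length v = p" and i: "i + 2 * p \<le> length u"
      and vv: "take (2 * p) (drop i u) = v @ v"
    unfolding has_square_of_period_def sublist_iff_take_drop by (auto simp: mult_2)
  have "u ! (i + j) = u ! (i + j + p)" if "j < p" for j
  proof -
    have "u ! (i + j) = (v @ v) ! j" "u ! (i + j + p) = (v @ v) ! (p + j)"
      using i that by (simp_all flip: vv add: ac_simps)
    then show ?thesis
      using v that by (simp add: nth_append)
  qed
  then show "\<exists>i. i + 2 * p \<le> length u \<and> (\<forall>j<p. u ! (i + j) = u ! (i + j + p))"
    using i by blast
next
  assume "\<exists>i. i + 2 * p \<le> length u \<and> (\<forall>j<p. u ! (i + j) = u ! (i + j + p))"
  then obtain i where i: "i + 2 * p \<le> length u"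
      and match: "\<And>j. j < p \<Longrightarrow> u ! (i + j) = u ! (i + j + p)"
    by blast
  define v where "v = take p (drop i u)"
  have "take (2 * p) (drop i u) = v @ v"
  proof (rule nth_equalityI)
    fix k
    assume "k < length (take (2 * p) (drop i u))"
    then have k: "k < 2 * p"
      using i by simp
    show "take (2 * p) (drop i u) ! k = (v @ v) ! k"
    proof (cases "k < p")
      case True
      then show ?thesis
        using i k by (simp add: v_def nth_append)
    next
      case False
      then show ?thesis
        using i k match[of "k - p"] by (simp add: v_def nth_append)
    qed
  qed (use i in \<open>simp add: v_def\<close>)
  then show "has_square_of_period p u"
    unfolding has_square_of_period_def sublist_iff_take_drop
    using i by (intro exI[of _ v] conjI exI[of _ i]) (auto simp: v_def mult_2)
qed

lemma has_square_of_period_code [code]: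
  "has_square_of_period p u \<longleftrightarrow> sublist (replicate p True) (map2 (=) u (drop p u))"
  unfolding has_square_of_period_iff_nth sublist_iff_take_drop
  by (intro iff_exI conj_cong) (auto simp: list_eq_iff_nth_eq ac_simps)

lemma dfao_run_eqI:
  assumes "2 \<le> k" "f 0 = q0" "\<And>n. 0 < n \<Longrightarrow> f n = delta (f (n div k)) (n mod k)"
  shows "dfao_run k q0 delta n = f n"
proof (induction n rule: less_induct)
  case (less n)
  show ?case
  proof (cases "n = 0")
    case True
    have "base_digits k 0 = []"
      by (subst base_digits.simps) simp
    then show ?thesis
      using True assms(2) by (simp add: dfao_run_def)
  next
    case False
    have "base_digits k n = base_digits k (n div k) @ [n mod k]"
      using False assms(1) by (subst base_digits.simps) simp
    then have "dfao_run k q0 delta n = delta (dfao_run k q0 delta (n div k)) (n mod k)"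
      by (simp add: dfao_run_def)
    moreover have "n div k < n"
      using False assms(1) by simp
    ultimately show ?thesis
      using less.IH assms(3) False by simp
  qed
qed

section \<open>The fixed point of g\<close>

function gfix :: "nat \<Rightarrow> nat" where
  "gfix n = (if n = 0 then 0 else g (gfix (n div 2)) ! (n mod 2))"
  by auto
termination by (relation "measure id") auto

declare gfix.simps [simp del]

lemma gfix_0 [simp]: "gfix 0 = 0"
  by (simp add: gfix.simps)

lemma length_g [simp]: "length (g a) = 2"
  by (simp add: g_def)

lemma gfix_rec: "gfix n = g (gfix (n div 2)) ! (n mod 2)"
  by (cases "n = 0") (simp_all add: gfix.simps[of n] g_def)

lemma gfix_double:
  assumes "d < 2"
  shows "gfix (2 * m + d) = g (gfix m) ! d"
  using gfix_rec[of "2 * m + d"] assms by simp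

lemma gfix_less_4: "gfix n < 4"
  using gfix_double[of "n mod 2" "n div 2"] by (auto simp: g_def nth_Cons split: nat.splits)

lemma morph_g_gfix_factor: "morph g (map gfix [m..<m + k]) = map gfix [2 * m..<2 * m + 2 * k]"
proof (rule nth_equalityI)
  show "length (morph g (map gfix [m..<m + k])) = length (map gfix [2 * m..<2 * m + 2 * k])"
    by (simp add: length_morph_uniform)
next
  fix t
  assume "t < length (morph g (map gfix [m..<m + k]))"
  then have t: "t < 2 * k" by (simp add: length_morph_uniform)
  have "morph g (map gfix [m..<m + k]) ! t = g (gfix (m + t div 2)) ! (t mod 2)"
    using t by (simp add: morph_uniform_nth)
  also have "\<dots> = gfix (2 * m + t)"
    using gfix_double[of "t mod 2" "m + t div 2"] by (simp add: algebra_simps)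
  finally show "morph g (map gfix [m..<m + k]) ! t = map gfix [2 * m..<2 * m + 2 * k] ! t"
    using t by simp
qed

lemma fixpoint_g_eq_gfix: "fixpoint g 0 = gfix"
proof
  fix n
  have iterate: "(morph g ^^ k) [0] = map gfix [0..<2 ^ k]" for k
    by (induction k) (simp_all add: morph_g_gfix_factor[of 0, simplified])
  have "n < 2 ^ Suc n"
    using less_exp[of "Suc n"] by simp
  then show "fixpoint g 0 n = gfix n"
    unfolding fixpoint_def iterate by simp
qed

lemma vtm_eq: "vtm n = tau (gfix n)"
  by (simp add: vtm_def fixpoint_g_eq_gfix)

lemma odd_gfix_imp_odd:
  assumes "odd (gfix n)"
  shows "odd n"
proof
  assume "even n"
  then have "gfix n = g (gfix (n div 2)) ! 0"
    using gfix_rec[of n] by simp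
  with assms show False
    by (simp add: g_def split: if_splits)
qed

lemma odd_gfix_if_mod_4:
  assumes "n mod 4 = 1"
  shows "odd (gfix n)"
proof -
  have "n = 2 * (2 * (n div 4) + 0) + 1"
    using assms by presburger
  then have "gfix n = g (g (gfix (n div 4)) ! 0) ! 1"
    using gfix_double[of 1 "2 * (n div 4) + 0"] gfix_double[of 0 "n div 4"] by simp
  then show ?thesis
    by (simp add: g_def)
qed

definition gfix_factors_11 :: "nat list list" where
  "gfix_factors_11 = [[0,1,2,0,2,3,0,1,2,3,0],
    [0,1,2,0,2,3,0,2,0,1,2],
    [0,1,2,3,0,1,2,0,2,3,0],
    [0,1,2,3,0,2,0,1,2,0,2],
    [0,1,2,3,0,2,0,1,2,3,0],
    [0,2,0,1,2,0,2,3,0,1,2],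
    [0,2,0,1,2,0,2,3,0,2,0],
    [0,2,0,1,2,3,0,1,2,0,2],
    [0,2,3,0,1,2,3,0,2,0,1],
    [0,2,3,0,2,0,1,2,0,2,3],
    [0,2,3,0,2,0,1,2,3,0,1],
    [1,2,0,2,3,0,1,2,3,0,2],
    [1,2,0,2,3,0,2,0,1,2,0],
    [1,2,0,2,3,0,2,0,1,2,3],
    [1,2,3,0,1,2,0,2,3,0,1],
    [1,2,3,0,1,2,0,2,3,0,2],
    [1,2,3,0,2,0,1,2,0,2,3],
    [1,2,3,0,2,0,1,2,3,0,1],
    [2,0,1,2,0,2,3,0,1,2,3],
    [2,0,1,2,0,2,3,0,2,0,1],
    [2,0,1,2,3,0,1,2,0,2,3],
    [2,0,2,3,0,1,2,3,0,2,0],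
    [2,0,2,3,0,2,0,1,2,0,2],
    [2,0,2,3,0,2,0,1,2,3,0],
    [2,3,0,1,2,0,2,3,0,1,2],
    [2,3,0,1,2,0,2,3,0,2,0],
    [2,3,0,1,2,3,0,2,0,1,2],
    [2,3,0,2,0,1,2,0,2,3,0],
    [2,3,0,2,0,1,2,3,0,1,2],
    [3,0,1,2,0,2,3,0,1,2,3],
    [3,0,1,2,0,2,3,0,2,0,1],
    [3,0,1,2,3,0,2,0,1,2,0],
    [3,0,1,2,3,0,2,0,1,2,3],
    [3,0,2,0,1,2,0,2,3,0,1],
    [3,0,2,0,1,2,0,2,3,0,2],
    [3,0,2,0,1,2,3,0,1,2,0]]"

lemma gfix_factors_11_closed:
  "list_all (\<lambda>v. take 11 (morph g v) \<in> set gfix_factors_11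
      \<and> take 11 (drop 1 (morph g v)) \<in> set gfix_factors_11) gfix_factors_11"
  by (simp add: gfix_factors_11_def morph_def g_def)

lemma gfix_factor_11_mem: "map gfix [i..<i + 11] \<in> set gfix_factors_11"
proof (induction i rule: less_induct)
  case (less i)
  show ?case
  proof (cases "i = 0")
    case True
    have "map gfix [0..<11] = [0, 1, 2, 0, 2, 3, 0, 1, 2, 3, 0]"
      by code_simp
    then show ?thesis
      using True by (simp add: gfix_factors_11_def)
  next
    case False
    let ?v = "map gfix [i div 2..<i div 2 + 11]"
    have "?v \<in> set gfix_factors_11"
      using False less.IH by simp
    then have "take 11 (drop (i mod 2) (morph g ?v)) \<in> set gfix_factors_11"
      using gfix_factors_11_closed by (auto simp: list_all_iff mod2_eq_if)
    moreover have "take 11 (drop (i mod 2) (morph g ?v)) = map gfix [i..<i + 11]"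
      unfolding morph_g_gfix_factor by (rule nth_equalityI) auto
    ultimately show ?thesis by simp
  qed
qed

section \<open>Square-freeness of vtm\<close>

definition lift_rel ::
  "(nat \<Rightarrow> nat list) \<Rightarrow> (nat \<Rightarrow> nat \<Rightarrow> bool) \<Rightarrow> (nat \<Rightarrow> nat \<Rightarrow> bool) \<Rightarrow> nat \<Rightarrow> nat \<Rightarrow> bool" where
  "lift_rel h R S x z \<longleftrightarrow> R (h x ! 0) (h z ! 0) \<and> S (h x ! 1) (h z ! 1)"

definition shift_pattern ::
  "(nat \<Rightarrow> nat \<Rightarrow> bool) \<Rightarrow> (nat \<Rightarrow> nat \<Rightarrow> bool) \<Rightarrow> (nat \<Rightarrow> nat \<Rightarrow> bool) \<Rightarrow>
    (nat \<Rightarrow> nat) \<Rightarrow> nat \<Rightarrow> nat \<Rightarrow> nat \<Rightarrow> bool" where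
  "shift_pattern A M B w i p n \<longleftrightarrow> 0 < n \<and> A (w i) (w (i + p))
     \<and> (\<forall>j\<in>{1..<n - 1}. M (w (i + j)) (w (i + j + p)))
     \<and> B (w (i + n - 1)) (w (i + n - 1 + p))"

lemma lift_rel_fixed_point:
  assumes "\<And>m d. d < 2 \<Longrightarrow> w (2 * m + d) = h (w m) ! d"
  shows "lift_rel h R S (w m) (w (m + q)) \<longleftrightarrow>
    R (w (2 * m)) (w (2 * m + 2 * q)) \<and> S (w (2 * m + 1)) (w (2 * m + 1 + 2 * q))"
  using assms[of 0 m] assms[of 1 m] assms[of 0 "m + q"] assms[of 1 "m + q"]
  by (simp add: lift_rel_def algebra_simps)

lemma shift_pattern_halve:
  fixes h :: "nat \<Rightarrow> nat list"
  assumes fixed: "\<And>m d. d < 2 \<Longrightarrow> w (2 * m + d) = h (w m) ! d"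
    and pattern: "shift_pattern A M B w i (2 * q) n" and "3 \<le> n"
  defines "T \<equiv> \<lambda>_ _. True"
  shows "shift_pattern
           (if even i then lift_rel h A M else lift_rel h T A) (lift_rel h M M)
           (if even (i + n - 1) then lift_rel h B T else lift_rel h M B)
           w (i div 2) q ((i + n - 1) div 2 - i div 2 + 1)"
proof -
  define e where "e = i + n - 1"
  note lift = lift_rel_fixed_point[OF fixed]
  have first: "A (w i) (w (i + 2 * q))"
    and middle: "\<And>j. 0 < j \<Longrightarrow> j < n - 1 \<Longrightarrow> M (w (i + j)) (w (i + j + 2 * q))"
    and last: "B (w e) (w (e + 2 * q))"
    using pattern by (auto simp: shift_pattern_def e_def)
  have "(if even i then lift_rel h A M else lift_rel h T A) (w (i div 2)) (w (i div 2 + q))"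
  proof (cases "even i")
    case True
    then show ?thesis
      using first middle[of 1] \<open>3 \<le> n\<close> by (simp add: lift)
  next
    case False
    then show ?thesis
      using first by (simp add: lift T_def odd_two_times_div_two_succ)
  qed
  moreover have "(if even e then lift_rel h B T else lift_rel h M B) (w (e div 2)) (w (e div 2 + q))"
  proof (cases "even e")
    case True
    then show ?thesis
      using last by (simp add: lift T_def)
  next
    case False
    then have "e - 1 = i + (n - 2)" "2 * (e div 2) = e - 1" "2 * (e div 2) + 1 = e"
      using \<open>3 \<le> n\<close> by (auto simp: e_def odd_two_times_div_two_succ)
    then show ?thesis
      using False last middle[of "n - 2"] \<open>3 \<le> n\<close> by (simp add: lift)
  qed
  moreover have "lift_rel h M M (w (i div 2 + t)) (w (i div 2 + t + q))"
    if "0 < t" "t < e div 2 - i div 2" for t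
  proof -
    have "0 < 2 * (i div 2 + t) - i" "2 * (i div 2 + t) + 1 - i < n - 1"
      using that unfolding e_def by auto
    then show ?thesis
      using middle[of "2 * (i div 2 + t) - i"] middle[of "2 * (i div 2 + t) + 1 - i"]
      by (simp add: lift)
  qed
  moreover have "i div 2 \<le> e div 2"
    using \<open>3 \<le> n\<close> by (simp add: e_def div_le_mono)
  ultimately show ?thesis
    unfolding shift_pattern_def e_def[symmetric] by (auto simp: add.assoc)
qed

lemma shift_pattern_gfix_mono:
  assumes "shift_pattern A M B gfix i p n"
    and "\<And>x z. x < 4 \<Longrightarrow> z < 4 \<Longrightarrow> A x z \<Longrightarrow> A' x z"
    and "\<And>x z. x < 4 \<Longrightarrow> z < 4 \<Longrightarrow> M x z \<Longrightarrow> M' x z"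
    and "\<And>x z. x < 4 \<Longrightarrow> z < 4 \<Longrightarrow> B x z \<Longrightarrow> B' x z"
  shows "shift_pattern A' M' B' gfix i p n"
  using assms gfix_less_4 unfolding shift_pattern_def by blast

lemma shift_pattern_cong:
  assumes "\<And>j. j < n + p \<Longrightarrow> w (i + j) = w' (i' + j)"
  shows "shift_pattern A M B w i p n = shift_pattern A M B w' i' p n"
proof -
  have "w (i + j + p) = w' (i' + j + p)" if "j < n" for j
    using assms[of "j + p"] that by (simp add: add.assoc)
  moreover have "w (i + j) = w' (i' + j)" if "j < n" for j
    using assms[of j] that by simp
  moreover have "w i = w' i'" "w (i + p) = w' (i' + p)" if "0 < n"
    using assms[of 0] assms[of p] that by simp_all
  ultimately show ?thesis
    unfolding shift_pattern_def by (cases n) (auto simp: add.assoc)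
qed

definition same_tau :: "nat \<Rightarrow> nat \<Rightarrow> bool" where
  "same_tau x z \<longleftrightarrow> tau x = tau z"

definition same_parity :: "nat \<Rightarrow> nat \<Rightarrow> bool" where
  "same_parity x z \<longleftrightarrow> even x = even z"

definition same_head :: "nat \<Rightarrow> nat \<Rightarrow> bool" where
  "same_head x z \<longleftrightarrow> g x ! 0 = g z ! 0"

definition square_pattern :: "nat \<Rightarrow> nat \<Rightarrow> bool" where
  "square_pattern i p \<longleftrightarrow> shift_pattern same_tau same_tau same_tau gfix i p p"

definition near_square_pattern :: "nat \<Rightarrow> nat \<Rightarrow> bool" where
  "near_square_pattern i p \<longleftrightarrow> shift_pattern same_parity (=) same_head gfix i p (p + 1)"

lemma less_4_cases: "(x :: nat) < 4 \<Longrightarrow> x = 0 \<or> x = 1 \<or> x = 2 \<or> x = 3"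
  by auto

lemma lift_rel_g_le:
  assumes "x < 4" "z < 4"
  shows "lift_rel g same_tau same_tau x z \<Longrightarrow> x = z"
    and "lift_rel g R (=) x z \<Longrightarrow> x = z"
    and "lift_rel g (\<lambda>_ _. True) same_tau x z \<Longrightarrow> same_parity x z"
    and "lift_rel g (\<lambda>_ _. True) same_parity x z \<Longrightarrow> same_parity x z"
    and "lift_rel g same_tau (\<lambda>_ _. True) x z \<Longrightarrow> same_head x z"
    and "lift_rel g same_head (\<lambda>_ _. True) x z \<Longrightarrow> same_head x z"
    and "lift_rel g (=) same_head x z \<Longrightarrow> same_head x z"
  using less_4_cases[OF assms(1)] less_4_cases[OF assms(2)]
  by (auto simp: lift_rel_def same_tau_def same_parity_def same_head_def g_def tau_def)

lemma tau_eq_1_iff: "x < 4 \<Longrightarrow> tau x = 1 \<longleftrightarrow> odd x"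
  by (auto simp: tau_def)

lemma shift_pattern_gfix_even_shift:
  assumes "shift_pattern A M B gfix i p n" "6 \<le> n" "\<And>x z. M x z \<Longrightarrow> same_tau x z"
  shows "even p"
proof -
  have "\<exists>j. 1 \<le> j \<and> j \<le> 4 \<and> (i + j) mod 4 = 1"
    by presburger
  then obtain j where j: "1 \<le> j" "j \<le> 4" "(i + j) mod 4 = 1"
    by blast
  then have "same_tau (gfix (i + j)) (gfix (i + j + p))"
    using assms unfolding shift_pattern_def by auto
  then have "odd (gfix (i + j + p))"
    using odd_gfix_if_mod_4[OF j(3)] tau_eq_1_iff gfix_less_4 by (metis same_tau_def)
  then have "odd (i + j + p)"
    by (rule odd_gfix_imp_odd)
  moreover have "odd (i + j)"
    using j(3) by presburger
  ultimately show ?thesis by simp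
qed

lemma square_pattern_halve:
  assumes "square_pattern i p" "6 \<le> p"
  shows "square_pattern (i div 2) (p div 2) \<or> near_square_pattern (i div 2) (p div 2)"
proof -
  have "even p"
    using assms shift_pattern_gfix_even_shift unfolding square_pattern_def by blast
  then obtain q where p: "p = 2 * q" ..
  have "shift_pattern same_tau same_tau same_tau gfix i (2 * q) (2 * q)" "3 \<le> 2 * q"
    using assms unfolding square_pattern_def p by simp_all
  note halved = shift_pattern_halve[OF gfix_double this]
  show ?thesis
  proof (cases "even i")
    case True
    then have "(i + 2 * q - 1) div 2 - i div 2 + 1 = q" "odd (i + 2 * q - 1)"
      using \<open>3 \<le> 2 * q\<close> by (auto elim!: evenE)
    then have "shift_pattern (lift_rel g same_tau same_tau) (lift_rel g same_tau same_tau)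
        (lift_rel g same_tau same_tau) gfix (i div 2) q q"
      using halved True by simp
    then have "square_pattern (i div 2) q"
      unfolding square_pattern_def
      by (rule shift_pattern_gfix_mono) (auto simp: same_tau_def dest: lift_rel_g_le(1))
    then show ?thesis using p by simp
  next
    case False
    then have "(i + 2 * q - 1) div 2 - i div 2 + 1 = q + 1" "even (i + 2 * q - 1)"
      using \<open>3 \<le> 2 * q\<close> by (auto elim!: oddE)
    then have "shift_pattern (lift_rel g (\<lambda>_ _. True) same_tau) (lift_rel g same_tau same_tau)
        (lift_rel g same_tau (\<lambda>_ _. True)) gfix (i div 2) q (q + 1)"
      using halved False by simp
    then have "near_square_pattern (i div 2) q"
      unfolding near_square_pattern_def
      by (rule shift_pattern_gfix_mono) (auto dest: lift_rel_g_le(1,3,5))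
    then show ?thesis using p by simp
  qed
qed

lemma near_square_pattern_halve:
  assumes "near_square_pattern i p" "5 \<le> p"
  shows "near_square_pattern (i div 2) (p div 2)"
proof -
  have "even p"
    using assms shift_pattern_gfix_even_shift unfolding near_square_pattern_def
    by (fastforce simp: same_tau_def)
  then obtain q where p: "p = 2 * q" ..
  have "shift_pattern same_parity (=) same_head gfix i (2 * q) (2 * q + 1)" "3 \<le> 2 * q + 1"
    using assms unfolding near_square_pattern_def p by simp_all
  note halved = shift_pattern_halve[OF gfix_double this]
  show ?thesis
  proof (cases "even i")
    case True
    then have "(i + (2 * q + 1) - 1) div 2 - i div 2 + 1 = q + 1" "even (i + (2 * q + 1) - 1)"
      by (auto elim!: evenE)
    then have "shift_pattern (lift_rel g same_parity (=)) (lift_rel g (=) (=))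
        (lift_rel g same_head (\<lambda>_ _. True)) gfix (i div 2) q (q + 1)"
      using halved True by simp
    then have "near_square_pattern (i div 2) q"
      unfolding near_square_pattern_def
      by (rule shift_pattern_gfix_mono) (auto simp: same_parity_def dest: lift_rel_g_le(2,6))
    then show ?thesis using p by simp
  next
    case False
    then have "(i + (2 * q + 1) - 1) div 2 - i div 2 + 1 = q + 1" "odd (i + (2 * q + 1) - 1)"
      by (auto elim!: oddE)
    then have "shift_pattern (lift_rel g (\<lambda>_ _. True) same_parity) (lift_rel g (=) (=))
        (lift_rel g (=) same_head) gfix (i div 2) q (q + 1)"
      using halved False by simp
    then have "near_square_pattern (i div 2) q"
      unfolding near_square_pattern_def
      by (rule shift_pattern_gfix_mono) (auto dest: lift_rel_g_le(2,4,7))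
    then show ?thesis using p by simp
  qed
qed

lemma no_short_square_patterns:
  "list_all (\<lambda>v. list_all (\<lambda>p.
       \<not> shift_pattern same_tau same_tau same_tau ((!) v) 0 p p
     \<and> \<not> shift_pattern same_parity (=) same_head ((!) v) 0 p (p + 1)) [1..<6]) gfix_factors_11"
  by code_simp

lemma no_square_patterns:
  assumes "0 < p"
  shows "\<not> square_pattern i p \<and> \<not> near_square_pattern i p"
  using assms
proof (induction p arbitrary: i rule: less_induct)
  case (less p)
  show ?case
  proof (cases "p \<le> 5")
    case True
    let ?v = "map gfix [i..<i + 11]"
    have "p \<in> set [1..<6]"
      using True less.prems by auto
    then have "\<not> shift_pattern same_tau same_tau same_tau ((!) ?v) 0 p p
        \<and> \<not> shift_pattern same_parity (=) same_head ((!) ?v) 0 p (p + 1)"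
      using no_short_square_patterns gfix_factor_11_mem[of i] by (auto simp: list_all_iff)
    moreover have "shift_pattern A M B gfix i p n = shift_pattern A M B ((!) ?v) 0 p n"
      if "n + p \<le> 11" for A M B n
      by (rule shift_pattern_cong) (use that in simp)
    ultimately show ?thesis
      using True unfolding square_pattern_def near_square_pattern_def by simp
  next
    case False
    then have "\<not> square_pattern i' (p div 2) \<and> \<not> near_square_pattern i' (p div 2)" for i'
      using less.IH[of "p div 2"] by simp
    then show ?thesis
      using False square_pattern_halve near_square_pattern_halve by fastforce
  qed
qed

theorem vtm_squarefree:
  assumes "0 < p"
  shows "\<exists>k<p. vtm (c + k) \<noteq> vtm (c + k + p)"
proof (rule ccontr)
  assume "\<not> ?thesis"
  then have "\<forall>k<p. same_tau (gfix (c + k)) (gfix (c + k + p))"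
    by (simp add: vtm_eq same_tau_def)
  then have "square_pattern c p"
    using assms unfolding square_pattern_def shift_pattern_def
    by (auto simp: add.assoc dest: spec[of _ "p - 1"])
  then show False
    using no_square_patterns[OF assms] by blast
qed

section \<open>Squares of the image of vtm under sigma\<close>

lemma sigma_explicit [code]:
  "sigma a =
    (if a = 0 then [0,0,0,1,1,0,0,1,0,1,1,0,0,0,1,1,1,0,0,1,0,1,1,0,0,1,1,1,0,0,0,1,0,1,1,1,0,0,1,0,1,1,0,0,0,1,0,1,1,1]
     else if a = 1 then [0,0,0,1,1,0,0,1,0,1,1,0,0,0,1,0,1,1,1,0,0,1,0,1,1,0,0,1,1,1,0,0,0,1,0,1,1,0,0,0,1,1,1,0,0,1,0,1,1,1]
     else [0,0,0,1,1,0,0,1,0,1,1,0,0,0,1,0,1,1,1,0,0,1,0,1,1,0,0,0,1,1,1,0,0,1,0,1,1,1,0,0,0,1,0,1,1,0,0,1,1,1])"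
  by (simp add: sigma_def str01_def)

lemma length_sigma [simp]: "length (sigma a) = 50"
  by (simp add: sigma_explicit)

lemma sigma_binary: "set (sigma a) \<subseteq> {0, 1}"
  by (simp add: sigma_explicit)

lemma sigma_eq_if_take_28:
  assumes "x < 3" "z < 3" "take 28 (sigma x) = take 28 (sigma z)"
  shows "x = z"
proof -
  have "x \<in> {0, 1, 2}" "z \<in> {0, 1, 2}"
    using assms(1,2) by auto
  then show ?thesis
    using assms(3) by (auto simp: sigma_explicit)
qed

lemma sigma_eq_if_drop_42:
  assumes "x < 3" "z < 3" "drop 42 (sigma x) = drop 42 (sigma z)"
  shows "x = z"
proof -
  have "x \<in> {0, 1, 2}" "z \<in> {0, 1, 2}"
    using assms(1,2) by auto
  then show ?thesis
    using assms(3) by (auto simp: sigma_explicit)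
qed
lemma vtm_less_3: "vtm n < 3"
  by (simp add: vtm_eq tau_def)

definition adjacent_pairs :: "(nat \<times> nat) list" where
  "adjacent_pairs = [(0, 1), (0, 2), (1, 0), (1, 2), (2, 0), (2, 1)]"

lemma vtm_adjacent_pair: "(vtm n, vtm (Suc n)) \<in> set adjacent_pairs"
proof -
  have "vtm (Suc n) \<noteq> vtm n"
    using vtm_squarefree[of 1 n] by auto
  moreover have "vtm n \<in> {0, 1, 2}" "vtm (Suc n) \<in> {0, 1, 2}"
    using vtm_less_3[of n] vtm_less_3[of "Suc n"] by auto
  ultimately show ?thesis
    by (auto simp: adjacent_pairs_def)
qed

lemma list_all_adjacent_pairs:
  assumes "list_all (\<lambda>(x, z). P x z) adjacent_pairs"
  shows "P (vtm n) (vtm (Suc n))"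
  using assms vtm_adjacent_pair[of n] unfolding list_all_iff by fastforce

abbreviation svtm :: "nat \<Rightarrow> nat" where
  "svtm \<equiv> morph_inf sigma vtm"

lemma svtm_eq: "svtm n = sigma (vtm (n div 50)) ! (n mod 50)"
  by (rule morph_inf_uniform) simp_all

lemma svtm_binary: "svtm n \<in> {0, 1}"
proof -
  have "sigma (vtm (n div 50)) ! (n mod 50) \<in> set (sigma (vtm (n div 50)))"
    by (rule nth_mem) simp
  then show ?thesis
    using sigma_binary unfolding svtm_eq by blast
qed

lemma svtm_window:
  assumes "t mod 50 + j < 100"
  shows "svtm (t + j) = (sigma (vtm (t div 50)) @ sigma (vtm (Suc (t div 50)))) ! (t mod 50 + j)"
proof -
  define r where "r = t mod 50 + j"
  have t: "t + j = r + 50 * (t div 50)"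
    unfolding r_def by simp
  show ?thesis
  proof (cases "r < 50")
    case True
    then have "(t + j) div 50 = t div 50" "(t + j) mod 50 = r"
      unfolding t by simp_all
    then show ?thesis
      using True by (simp add: svtm_eq nth_append r_def)
  next
    case False
    then have t': "t + j = (r - 50) + 50 * Suc (t div 50)" and "r - 50 < 50"
      using t assms r_def by simp_all
    then have "(t + j) div 50 = Suc (t div 50)" "(t + j) mod 50 = r - 50"
      unfolding t' mod_mult_self2 by simp_all
    then show ?thesis
      using False by (simp add: svtm_eq nth_append r_def)
  qed
qed

lemma svtm_factor_sublist:
  assumes "is_factor v svtm" "length v \<le> 51"
  shows "\<exists>(x, z)\<in>set adjacent_pairs. sublist v (take (49 + length v) (sigma x @ sigma z))"
proof -
  obtain i where i: "\<And>j. j < length v \<Longrightarrow> svtm (i + j) = v ! j"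
    using assms(1) unfolding is_factor_def by blast
  define u where "u = sigma (vtm (i div 50)) @ sigma (vtm (Suc (i div 50)))"
  have "take (length v) (drop (i mod 50) (take (49 + length v) u)) = v"
  proof (rule nth_equalityI)
    show "length (take (length v) (drop (i mod 50) (take (49 + length v) u))) = length v"
      using assms(2) by (simp add: u_def)
  next
    fix j
    assume "j < length (take (length v) (drop (i mod 50) (take (49 + length v) u)))"
    then have "j < length v" "i mod 50 + j < 49 + length v"
      using assms(2) by (auto simp: u_def)
    moreover have "length u = 100"
      by (simp add: u_def)
    ultimately have "take (length v) (drop (i mod 50) (take (49 + length v) u)) ! j = u ! (i mod 50 + j)"
      by simp
    also have "\<dots> = v ! j"
      using i[of j] svtm_window[of i j] \<open>j < length v\<close> assms(2) unfolding u_def by simp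
    finally show "take (length v) (drop (i mod 50) (take (49 + length v) u)) ! j = v ! j" .
  qed
  then have "sublist v (take (49 + length v) u)"
    unfolding sublist_iff_take_drop using assms(2)
    by (intro exI[of _ "i mod 50"]) (auto simp: u_def)
  then show ?thesis
    using vtm_adjacent_pair[of "i div 50"] unfolding u_def by blast
qed

lemma no_square_of_period_3_to_23:
  "list_all (\<lambda>(x, z). list_all (\<lambda>p.
       \<not> has_square_of_period p (take (49 + 2 * p) (sigma x @ sigma z))) [3..<24]) adjacent_pairs"
  by code_simp

lemma no_square_of_period_2_but_0101:
  "list_all (\<lambda>(x, z). list_all (\<lambda>v.
       \<not> sublist (v @ v) (take 53 (sigma x @ sigma z))) [[0, 0], [1, 0], [1, 1]]) adjacent_pairs"
  by code_simp

text \<open>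
  A decision tree reading the letters 0, ..., 23 of a window of svtm and returning its starting
  position modulo 50.
\<close>

definition phase_tree :: "(nat \<Rightarrow> nat) \<Rightarrow> nat" where
  "phase_tree u =
    (if u 20 = 0
     then (if u 21 = 0
           then (if u 16 = 0
                 then (if u 23 = 0
                       then (if u 4 = 0
                             then (if u 11 = 0
                                   then (if u 14 = 0 then (if u 0 = 0 then 11 else 47) else 35)
                                   else (if u 7 = 0 then 16 else 42))
                             else (if u 12 = 0 then 49 else 23))
                       else (if u 5 = 0
                             then (if u 0 = 0 then (if u 2 = 0 then 6 else 8) else 10)
                             else (if u 19 = 0
                                   then (if u 7 = 0 then 18 else 42)
                                   else (if u 0 = 0 then 30 else (if u 7 = 0 then 18 else 30)))))
                 else (if u 10 = 0
                       then (if u 5 = 0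
                             then (if u 8 = 0 then 3 else 41)
                             else (if u 0 = 0 then 5 else 22))
                       else (if u 2 = 0
                             then (if u 0 = 0
                                   then (if u 4 = 0 then 11 else 25)
                                   else (if u 4 = 0 then 9 else 17))
                             else (if u 23 = 0 then 19 else 31))))
           else (if u 14 = 0
                 then (if u 22 = 0
                       then (if u 13 = 0
                             then (if u 0 = 0
                                   then 12
                                   else (if u 1 = 0 then (if u 3 = 0 then 10 else 24) else 48))
                             else (if u 3 = 0 then 36 else 20))
                       else (if u 1 = 0
                             then (if u 16 = 0 then (if u 0 = 0 then 26 else 4) else 38)
                             else (if u 9 = 0 then 6 else 32)))
                 else (if u 8 = 0
                       then (if u 11 = 0
                             then (if u 2 = 0
                                   then 0
                                   else (if u 0 = 0 then (if u 1 = 0 then 12 else 26) else 14))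
                             else (if u 3 = 0 then 43 else (if u 0 = 0 then 24 else 7)))
                       else (if u 1 = 0
                             then (if u 16 = 0 then 45 else (if u 18 = 0 then 19 else 17))
                             else (if u 16 = 0 then (if u 0 = 0 then 22 else 26) else 2)))))
     else (if u 19 = 0
           then (if u 13 = 0
                 then (if u 21 = 0
                       then (if u 12 = 0
                             then (if u 1 = 0
                                   then (if u 0 = 0 then (if u 2 = 0 then 11 else 25) else 49)
                                   else 13)
                             else (if u 2 = 0 then 37 else 21))
                       else (if u 0 = 0
                             then (if u 15 = 0 then (if u 1 = 0 then 5 else 27) else 39)
                             else (if u 8 = 0 then 7 else 33)))
                 else (if u 7 = 0
                       then (if u 10 = 0
                             then (if u 1 = 0
                                   then 1
                                   else (if u 0 = 0
                                         then (if u 12 = 0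
                                               then 15
                                               else (if u 22 = 0 then 15 else 13))
                                         else 27))
                             else (if u 2 = 0 then 44 else (if u 0 = 0 then 8 else 25)))
                       else (if u 0 = 0
                             then (if u 15 = 0 then 46 else (if u 17 = 0 then 20 else 18))
                             else (if u 15 = 0 then (if u 1 = 0 then 27 else 23) else 3))))
           else (if u 18 = 0
                 then (if u 12 = 0
                       then (if u 14 = 0
                             then (if u 0 = 0 then (if u 2 = 0 then 6 else 8) else 28)
                             else (if u 15 = 0 then 40 else 34))
                       else (if u 2 = 0
                             then (if u 7 = 0
                                   then (if u 3 = 0 then (if u 1 = 0 then 24 else 21) else 4)
                                   else (if u 9 = 0 then 28 else 9))
                             else (if u 5 = 0
                                   then (if u 1 = 0 then (if u 4 = 0 then 21 else 45) else 47)
                                   else (if u 0 = 0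
                                         then 2
                                         else (if u 11 = 0
                                               then 16
                                               else (if u 21 = 0 then 16 else 14))))))
                 else (if u 4 = 0
                       then (if u 2 = 0
                             then (if u 6 = 0 then 9 else 48)
                             else (if u 0 = 0 then (if u 3 = 0 then 22 else 46) else 7))
                       else (if u 23 = 0
                             then (if u 1 = 0 then 29 else (if u 8 = 0 then 17 else 29))
                             else (if u 1 = 0 then 10 else 15))))))"

lemma phase_tree_cong:
  assumes "\<And>j. j < 24 \<Longrightarrow> u j = u' j"
  shows "phase_tree u = phase_tree u'"
  unfolding phase_tree_def using assms by (simp only: cong: if_cong)

lemma phase_tree_windows:
  "list_all (\<lambda>(x, z). list_all (\<lambda>b.
       phase_tree (\<lambda>j. (sigma x @ sigma z) ! (b + j)) = b) [0..<50]) adjacent_pairs"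
  by code_simp

lemma phase_tree_svtm: "phase_tree (\<lambda>j. svtm (t + j)) = t mod 50"
proof -
  let ?x = "vtm (t div 50)" and ?z = "vtm (Suc (t div 50))"
  have "phase_tree (\<lambda>j. svtm (t + j)) = phase_tree (\<lambda>j. (sigma ?x @ sigma ?z) ! (t mod 50 + j))"
    by (rule phase_tree_cong) (simp add: svtm_window)
  also have "\<dots> = t mod 50"
    using list_all_adjacent_pairs[OF phase_tree_windows, of "t div 50"]
    unfolding list_all_iff by simp
  finally show ?thesis .
qed

lemma svtm_block: "r < 50 \<Longrightarrow> svtm (50 * m + r) = sigma (vtm m) ! r"
  by (simp add: svtm_eq)

lemma vtm_eq_if_svtm_block_prefix:
  assumes "\<And>r. r < 28 \<Longrightarrow> svtm (50 * m + r) = svtm (50 * m' + r)"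
  shows "vtm m = vtm m'"
proof (rule sigma_eq_if_take_28[OF vtm_less_3 vtm_less_3])
  show "take 28 (sigma (vtm m)) = take 28 (sigma (vtm m'))"
    using assms by (intro nth_equalityI) (simp_all add: svtm_block)
qed

lemma vtm_eq_if_svtm_block_suffix:
  assumes "\<And>r. 42 \<le> r \<Longrightarrow> r < 50 \<Longrightarrow> svtm (50 * m + r) = svtm (50 * m' + r)"
  shows "vtm m = vtm m'"
proof (rule sigma_eq_if_drop_42[OF vtm_less_3 vtm_less_3])
  show "drop 42 (sigma (vtm m)) = drop 42 (sigma (vtm m'))"
    using assms[of "42 + _"] by (intro nth_equalityI) (simp_all add: svtm_block)
qed

lemma svtm_no_square_period_multiple_50:
  assumes "0 < k" and square: "\<And>j. j < 50 * k \<Longrightarrow> svtm (i + j) = svtm (i + 50 * k + j)"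
  shows False
proof -
  define a where "a = i div 50"
  define b where "b = i mod 50"
  have i: "i = 50 * a + b" and "b < 50"
    by (simp_all add: a_def b_def)
  have shift: "svtm (50 * (a + l) + r) = svtm (50 * (a + l + k) + r)"
    if "b \<le> 50 * l + r" "50 * l + r < 50 * k + b" for l r
    using square[of "50 * l + r - b"] that unfolding i by (simp add: algebra_simps)
  have middle: "vtm (a + l) = vtm (a + l + k)" if "1 \<le> l" "l < k" for l
    using that \<open>b < 50\<close> by (intro vtm_eq_if_svtm_block_prefix shift) auto
  txt \<open>Either the last 8 letters of block a or the first 28 of block a + k lie in the square.\<close>
  have "vtm a = vtm (a + k) \<or> vtm (a + k) = vtm (a + k + k)"
  proof (cases "b \<le> 42")
    case True
    then have "vtm (a + 0) = vtm (a + 0 + k)"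
      using \<open>0 < k\<close> by (intro vtm_eq_if_svtm_block_suffix shift) auto
    then show ?thesis by simp
  next
    case False
    then have "vtm (a + k) = vtm (a + k + k)"
      using \<open>0 < k\<close> \<open>b < 50\<close> by (intro vtm_eq_if_svtm_block_prefix shift) auto
    then show ?thesis ..
  qed
  then obtain c where "\<forall>l<k. vtm (c + l) = vtm (c + l + k)"
  proof
    assume first: "vtm a = vtm (a + k)"
    have "vtm (a + l) = vtm (a + l + k)" if "l < k" for l
      using first middle[of l] that by (cases "l = 0") simp_all
    then show thesis
      by (intro that[of a]) blast
  next
    assume last: "vtm (a + k) = vtm (a + k + k)"
    have "vtm (Suc a + l) = vtm (Suc a + l + k)" if "l < k" for l
      using last middle[of "Suc l"] that by (cases "k = Suc l") simp_all
    then show thesis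
      by (intro that[of "Suc a"]) blast
  qed
  then show False
    using vtm_squarefree[OF \<open>0 < k\<close>, of c] by blast
qed

lemma is_factor_svtm_binary:
  assumes "is_factor v svtm"
  shows "set v \<subseteq> {0, 1}"
proof
  fix c
  assume "c \<in> set v"
  then obtain j where "j < length v" "c = v ! j"
    by (auto simp: in_set_conv_nth)
  moreover obtain i where "\<forall>j<length v. svtm (i + j) = v ! j"
    using assms unfolding is_factor_def by blast
  ultimately show "c \<in> {0, 1}"
    using svtm_binary[of "i + j"] by simp
qed

lemma svtm_square_period_2:
  assumes "is_factor (v @ v) svtm" "length v = 2"
  shows "v = [0, 1]"
proof -
  have "length (v @ v) = 4"
    using assms(2) by simp
  then obtain x z where xz: "(x, z) \<in> set adjacent_pairs"
      and "sublist (v @ v) (take 53 (sigma x @ sigma z))"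
    using svtm_factor_sublist[OF assms(1)] by auto
  moreover have "\<forall>w\<in>set [[0, 0], [1, 0], [1, 1]]. \<not> sublist (w @ w) (take 53 (sigma x @ sigma z))"
    using bspec[OF no_square_of_period_2_but_0101[unfolded list_all_iff] xz]
    unfolding list_all_iff by (simp only: prod.case)
  ultimately have "v \<notin> {[0, 0], [1, 0], [1, 1]}"
    by auto
  moreover have "set v \<subseteq> {0, 1}"
    using is_factor_svtm_binary[OF assms(1)] by simp
  ultimately show ?thesis
    using assms(2) by (auto simp: length_Suc_conv numeral_2_eq_2)
qed

lemma svtm_no_square_period_3_to_23:
  assumes "is_factor (v @ v) svtm" "3 \<le> length v" "length v \<le> 23"
  shows False
proof -
  define p where "p = length v"
  have "length (v @ v) = 2 * p" "2 * p \<le> 51"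
    using assms(3) by (simp_all add: p_def)
  then obtain x z where xz: "(x, z) \<in> set adjacent_pairs"
      and "sublist (v @ v) (take (49 + 2 * p) (sigma x @ sigma z))"
    using svtm_factor_sublist[OF assms(1)] by auto
  then have "has_square_of_period p (take (49 + 2 * p) (sigma x @ sigma z))"
    unfolding has_square_of_period_def p_def by blast
  moreover have "\<forall>p\<in>set [3..<24]. \<not> has_square_of_period p (take (49 + 2 * p) (sigma x @ sigma z))"
    using bspec[OF no_square_of_period_3_to_23[unfolded list_all_iff] xz]
    unfolding list_all_iff by (simp only: prod.case)
  moreover have "p \<in> set [3..<24]"
    using assms(2,3) unfolding p_def by (simp only: set_upt atLeastLessThan_iff) simp
  ultimately show False
    by blast
qed

lemma svtm_no_square_period_ge_24:
  assumes "is_factor (v @ v) svtm" "24 \<le> length v"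
  shows False
proof -
  define p where "p = length v"
  obtain i where i: "\<And>j. j < 2 * p \<Longrightarrow> svtm (i + j) = (v @ v) ! j"
    using assms(1) unfolding is_factor_def p_def by (auto simp: mult_2)
  have period: "svtm (i + j) = svtm (i + p + j)" if "j < p" for j
    using i[of j] i[of "p + j"] that by (simp add: nth_append p_def add.assoc)
  then have "phase_tree (\<lambda>j. svtm (i + j)) = phase_tree (\<lambda>j. svtm (i + p + j))"
    using assms(2) unfolding p_def[symmetric] by (intro phase_tree_cong period) linarith
  then have "i mod 50 = (i + p) mod 50"
    by (simp only: phase_tree_svtm)
  then have "50 dvd p"
    using mod_eq_dvd_iff_nat[of i "i + p" 50] by simp
  then obtain k where "p = 50 * k" ..
  moreover have "0 < k"
    using assms(2) \<open>p = 50 * k\<close> unfolding p_def by simp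
  moreover have "svtm (i + j) = svtm (i + 50 * k + j)" if "j < 50 * k" for j
    using period[of j] that \<open>p = 50 * k\<close> by simp
  ultimately show False
    using svtm_no_square_period_multiple_50 by blast
qed

lemma svtm_square_factor:
  assumes "v \<noteq> []" "is_factor (v @ v) svtm"
  shows "v = [0] \<or> v = [1] \<or> v = [0, 1]"
proof -
  have "length v \<noteq> 0"
    using assms(1) by simp
  then consider "length v = 1" | "length v = 2" | "3 \<le> length v" "length v \<le> 23" | "24 \<le> length v"
    by linarith
  then show ?thesis
  proof cases
    case 1
    then show ?thesis
      using is_factor_svtm_binary[of "v @ v"] assms(2) by (auto simp: length_Suc_conv)
  next
    case 2
    then show ?thesis
      using svtm_square_period_2 assms(2) by blast
  next
    case 3
    then show ?thesis
      using svtm_no_square_period_3_to_23 assms(2) by blast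
  next
    case 4
    then show ?thesis
      using svtm_no_square_period_ge_24 assms(2) by blast
  qed
qed

lemma is_factor_if_map_eq:
  assumes "map w [i..<i + length u] = u"
  shows "is_factor u w"
  unfolding is_factor_def
proof (intro exI allI impI)
  fix j
  assume "j < length u"
  then show "w (i + j) = u ! j"
    using arg_cong[OF assms, of "\<lambda>xs. xs ! j"] by simp
qed

lemma squares_of_svtm: "squares_of svtm = {[0, 0], [1, 1], [0, 1, 0, 1]}"
proof
  show "squares_of svtm \<subseteq> {[0, 0], [1, 1], [0, 1, 0, 1]}"
  proof
    fix u
    assume "u \<in> squares_of svtm"
    then obtain v where "v \<noteq> []" "u = v @ v" "is_factor (v @ v) svtm"
      unfolding squares_of_def by blast
    then show "u \<in> {[0, 0], [1, 1], [0, 1, 0, 1]}"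
      using svtm_square_factor[of v] by auto
  qed
next
  have "svtm n = sigma 2 ! n" if "n < 50" for n
    using that by (simp add: svtm_eq vtm_eq tau_def)
  then have "is_factor [0, 0] svtm" "is_factor [1, 1] svtm" "is_factor [0, 1, 0, 1] svtm"
    by (intro is_factor_if_map_eq[of _ 0] is_factor_if_map_eq[of _ 3] is_factor_if_map_eq[of _ 6];
        simp add: sigma_explicit)+
  then show "{[0, 0], [1, 1], [0, 1, 0, 1]} \<subseteq> squares_of svtm"
    unfolding squares_of_def by (auto intro: exI[of _ "[0]"] exI[of _ "[1]"] exI[of _ "[0, 1]"])
qed

section \<open>An automaton with 109 states\<close>

text \<open>
  aut_state a r is the state reached on the binary input n when gfix (n div 50) = a and
  n mod 50 = r.
\<close>

definition aut_state :: "nat \<Rightarrow> nat \<Rightarrow> nat" where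
  "aut_state a r =
   [[0,1,2,3,4,5,6,7,8,9,10,11,12,13,14,15,16,17,18,19,20,21,22,23,24,25,26,27,28,29,30,31,32,
      33,34,35,36,37,38,39,40,41,42,43,44,45,46,47,48,49],
    [25,26,27,28,29,50,31,51,52,53,35,54,55,56,57,58,41,59,60,61,62,63,64,65,66,0,1,67,3,4,5,6,
      68,69,70,10,71,12,13,72,73,16,17,74,19,75,76,77,23,24],
    [25,26,27,28,29,50,31,51,52,53,35,54,55,56,57,78,41,79,80,81,62,63,82,83,84,85,86,67,87,88,
      5,89,68,69,9,10,11,12,90,72,91,92,93,94,95,96,97,98,99,100],
    [0,1,2,3,4,5,6,7,8,9,10,11,12,13,14,15,16,17,18,19,20,21,22,23,24,25,26,101,28,29,50,31,
      102,103,104,35,105,55,56,106,78,41,59,80,61,107,108,82,65,66]] ! a ! r"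

definition aut_delta :: "nat \<Rightarrow> nat \<Rightarrow> nat" where
  "aut_delta q d =
   [[0,2,4,6,8,10,12,14,16,18,20,22,24,26,28,30,32,34,36,38,40,42,44,46,48,25,27,29,31,52,35,
      55,57,41,60,62,64,66,1,3,5,68,70,71,13,73,17,19,76,23,35,57,41,80,82,84,86,87,5,9,11,90,
      91,93,95,97,99,4,14,16,18,22,28,30,36,40,42,44,5,9,11,90,95,97,99,0,2,6,8,12,26,50,102,
      104,105,56,78,59,61,108,65,29,57,41,80,82,87,91,93],
    [1,3,5,7,9,11,13,15,17,19,21,23,25,27,29,31,33,35,37,39,41,43,45,47,49,26,28,50,51,53,54,
      56,58,59,61,63,65,0,67,4,6,69,10,12,72,16,74,75,77,24,54,78,79,81,83,85,67,88,89,10,12,72,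
      92,94,96,98,100,5,15,17,19,23,29,31,37,41,43,45,89,10,12,72,96,98,100,1,3,7,9,13,101,31,
      103,35,55,106,41,80,107,82,66,50,78,79,81,83,88,92,94]] ! d ! q"

definition aut_out :: "nat \<Rightarrow> nat" where
  "aut_out q =
   [0,0,0,1,1,0,0,1,0,1,1,0,0,0,1,0,1,1,1,0,0,1,0,1,1,0,0,0,1,1,1,0,0,1,0,1,1,1,0,0,0,1,0,1,1,
     0,0,1,1,1,0,1,0,1,0,0,0,1,0,1,1,0,0,1,0,1,1,1,0,1,0,1,0,1,0,1,0,1,1,0,0,1,1,0,0,1,1,0,0,1,
     1,1,1,0,0,0,1,0,1,1,1,1,0,1,0,1,0,1,0] ! q"

definition new_state_witnesses :: "(nat \<times> nat) list" where
  "new_state_witnesses = [(1, 5), (1, 7), (1, 8), (1, 9), (1, 11), (1, 12), (1, 13), (1, 14), (1, 15), (1, 17), (1, 18), (1, 19), (1, 20), (1, 21), (1, 22), (1, 23), (1, 24), (1, 27), (1, 32), (1, 33), (1, 34), (1, 36), (1, 39), (1, 40), (1, 43), (1, 45), (1, 46), (1, 47), (2, 15), (2, 17), (2, 18), (2, 19), (2, 22), (2, 23), (2, 24), (2, 25), (2, 26), (2, 28), (2, 29), (2, 31), (2, 38), (2, 40), (2, 41), (2, 42), (2, 43), (2, 44), (2, 45), (2, 46), (2, 47), (2, 48), (2, 49), (3, 27), (3, 32), (3, 33), (3, 34), (3, 36), (3, 39), (3, 45), (3, 46)]"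

lemma aut_state_witnesses:
  "map (aut_state 0) [0..<50] = [0..<50]"
  "map (\<lambda>(a, r). aut_state a r) new_state_witnesses = [50..<109]"
  "list_all (\<lambda>(a, r). a < 4 \<and> r < 50) new_state_witnesses"
  by code_simp+

lemma aut_delta_aut_state:
  "list_all (\<lambda>a. list_all (\<lambda>r. list_all (\<lambda>d.
       aut_delta (aut_state a r) d = aut_state (g a ! ((2 * r + d) div 50)) ((2 * r + d) mod 50))
     [0..<2]) [0..<50]) [0..<4]"
  by code_simp

lemma aut_out_aut_state:
  "list_all (\<lambda>a. list_all (\<lambda>r. aut_out (aut_state a r) = sigma (tau a) ! r) [0..<50]) [0..<4]"
  by code_simp

lemma aut_delta_less:
  "list_all (\<lambda>q. aut_delta q 0 < 109 \<and> aut_delta q 1 < 109) [0..<109]"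
  by code_simp

lemma dfao_run_aut_delta: "dfao_run 2 0 aut_delta n = aut_state (gfix (n div 50)) (n mod 50)"
proof (rule dfao_run_eqI)
  show "aut_state (gfix (0 div 50)) (0 mod 50) = 0"
    by (simp add: aut_state_def)
next
  fix n :: nat
  define a r d where "a = gfix (n div 2 div 50)" "r = n div 2 mod 50" "d = n mod 2"
  define c where "c = 2 * (n div 2 div 50)"
  have "n = 2 * (n div 2) + n mod 2" "n div 2 = 50 * (n div 2 div 50) + n div 2 mod 50"
    by simp_all
  then have n: "n = (2 * r + d) + 50 * c"
    unfolding a_r_d_def c_def by linarith
  have "n div 50 = c + (2 * r + d) div 50" "n mod 50 = (2 * r + d) mod 50"
    using arg_cong[OF n, of "\<lambda>x. x div 50"] arg_cong[OF n, of "\<lambda>x. x mod 50"] by simp_all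
  moreover have "(2 * r + d) div 50 < 2" "a < 4" "r < 50" "d < 2"
    unfolding a_r_d_def using gfix_less_4 by simp_all
  ultimately have "aut_state (gfix (n div 50)) (n mod 50)
      = aut_state (g a ! ((2 * r + d) div 50)) ((2 * r + d) mod 50)"
    by (simp add: gfix_double a_r_d_def c_def)
  also have "\<dots> = aut_delta (aut_state a r) d"
    using aut_delta_aut_state \<open>a < 4\<close> \<open>r < 50\<close> \<open>d < 2\<close> by (simp add: list_all_iff)
  finally show "aut_state (gfix (n div 50)) (n mod 50)
      = aut_delta (aut_state (gfix (n div 2 div 50)) (n div 2 mod 50)) (n mod 2)"
    unfolding a_r_d_def .
qed simp

lemma svtm_dfao_generates: "dfao_generates 2 {0..<109} 0 aut_delta aut_out svtm"
  unfolding dfao_generates_def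
proof (intro conjI ballI allI impI)
  fix q d :: nat
  assume "q \<in> {0..<109}" "d < 2"
  then show "aut_delta q d \<in> {0..<109}"
    using aut_delta_less by (auto simp: list_all_iff less_2_cases_iff)
next
  fix n
  have "aut_out (aut_state (gfix (n div 50)) (n mod 50)) = sigma (tau (gfix (n div 50))) ! (n mod 50)"
    using aut_out_aut_state gfix_less_4 by (simp add: list_all_iff)
  then show "aut_out (dfao_run 2 0 aut_delta n) = svtm n"
    by (simp add: dfao_run_aut_delta svtm_eq vtm_eq)
qed simp_all

lemma aut_state_surj:
  assumes "q < 109"
  shows "\<exists>a<4. \<exists>r<50. aut_state a r = q"
proof (cases "q < 50")
  case True
  then have "aut_state 0 q = q"
    using arg_cong[OF aut_state_witnesses(1), of "\<lambda>xs. xs ! q"] by simp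
  with True show ?thesis
    by (intro exI[of _ "0 :: nat"] conjI exI[of _ q]) simp_all
next
  case False
  obtain a r where ar: "new_state_witnesses ! (q - 50) = (a, r)"
    by fastforce
  have "length new_state_witnesses = 59"
    using arg_cong[OF aut_state_witnesses(2), of length] by simp
  then have "(a, r) \<in> set new_state_witnesses"
    using False assms ar nth_mem[of "q - 50" new_state_witnesses] by auto
  moreover have "aut_state a r = q"
    using False assms ar \<open>length new_state_witnesses = 59\<close>
      arg_cong[OF aut_state_witnesses(2), of "\<lambda>xs. xs ! (q - 50)"]
    by (simp del: upt_rec_numeral)
  moreover note aut_state_witnesses(3)
  ultimately show ?thesis
    unfolding list_all_iff by fastforce
qed

lemma gfix_surj:
  assumes "a < 4"
  shows "\<exists>m. gfix m = a"
proof -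
  have "map gfix [0, 1, 2, 5] = [0, 1, 2, 3]"
    by code_simp
  then have "a \<in> gfix ` set [0, 1, 2, 5]"
    using assms unfolding set_map[symmetric] by auto
  then show ?thesis
    by blast
qed

lemma aut_reachable:
  assumes "q \<in> {0..<109}"
  shows "\<exists>n. dfao_run 2 0 aut_delta n = q"
proof -
  have "q < 109"
    using assms by simp
  then obtain a r where "a < 4" "r < 50" "aut_state a r = q"
    using aut_state_surj by blast
  moreover obtain m where "gfix m = a"
    using gfix_surj \<open>a < 4\<close> by blast
  ultimately have "dfao_run 2 0 aut_delta (50 * m + r) = q"
    by (simp add: dfao_run_aut_delta)
  then show ?thesis ..
qed

theorem theorem2:
  shows "k_automatic 2 (morph_inf sigma vtm)
    \<and> finite (squares_of (morph_inf sigma vtm)) \<and> card (squares_of (morph_inf sigma vtm)) = 3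
    \<and> (\<exists>Q q0 delta out. dfao_generates 2 Q q0 delta out (morph_inf sigma vtm) \<and> card Q = 109
          \<and> (\<forall>q\<in>Q. \<exists>n. dfao_run 2 q0 delta n = q))"
proof (intro conjI)
  show "k_automatic 2 svtm"
    unfolding k_automatic_def using svtm_dfao_generates by blast
  show "finite (squares_of svtm)" "card (squares_of svtm) = 3"
    by (simp_all add: squares_of_svtm)
  show "\<exists>Q q0 delta out. dfao_generates 2 Q q0 delta out svtm \<and> card Q = 109
      \<and> (\<forall>q\<in>Q. \<exists>n. dfao_run 2 q0 delta n = q)"
    using svtm_dfao_generates aut_reachable
    by (intro exI[of _ "{0..<109}"] exI[of _ 0] exI[of _ aut_delta] exI[of _ aut_out]) auto
qed

end
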